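(* Let $\Lambda$ be a set of positive integers such that for all positive integers $a,b$: $a,b\in\Lambda$ if and only if $\operatorname{lcm}(a,b)\in\Lambda$. Put $\Lambda'=\Lambda\cup\{2x:x\in\Lambda\}$. Suppose $\sigma=(\varepsilon,\beta,\gamma;(12))$ is an autoparatopism of a Latin square $L$ of order $n$. Let $R_\Lambda=\{i\in[n]:o_\beta(i)\in\Lambda\}$ and $S_{\Lambda'}=\{i\in[n]:o_\gamma(i)\in\Lambda'\}$. If $R_\Lambda\neq\emptyset$, then $|R_\Lambda|=|S_{\Lambda'}|$, and the submatrix of $L$ with rows $R_\Lambda$ and columns $R_\Lambda$ is a subsquare of $L$ whose symbol set is $S_{\Lambda'}$.
   Context: A Latin square $L$ of order $n$ is an $n\times n$ array with rows, columns and symbols indexed by $[n]$, in which each symbol occurs exactly once in each row and each column. Its set of triples is $O(L)$. A subsquare is a submatrix (a set of rows $R$ and columns $C$) that is itself a Latin square, i.e. whose cells contain exactly $|R|=|C|$ distinct symbols. Permutations act on the right; $\varepsilon$ is the identity. A paratopism $(\alpha,\beta,\gamma;(12))$ maps $L$ to $L^\sigma$ with triple set $\{(y\beta,x\alpha,z\gamma):(x,y,z)\in O(L)\}$. It is an autoparatopism of $L$ if $L^\sigma=L$. $o_\pi(i)$ is the length of the cycle of $\pi$ containing $i$ (fixed points are cycles of length $1$). *)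

theory Defs
  imports "HOL-Combinatorics.Permutations"
begin

text \<open>Rows, columns and symbols are indexed by [n] = {0..<n}.
A Latin square of order n is a function L giving the symbol in cell (x,y).\<close>

definition latin_square :: "nat \<Rightarrow> (nat \<Rightarrow> nat \<Rightarrow> nat) \<Rightarrow> bool" where
  "latin_square n L \<longleftrightarrow>
     (\<forall>x<n. \<forall>y<n. L x y < n) \<and>
     (\<forall>x<n. inj_on (L x) {0..<n}) \<and>
     (\<forall>y<n. inj_on (\<lambda>x. L x y) {0..<n})"

definition triples :: "nat \<Rightarrow> (nat \<Rightarrow> nat \<Rightarrow> nat) \<Rightarrow> (nat \<times> nat \<times> nat) set" where
  "triples n L = {(x, y, L x y) | x y. x < n \<and> y < n}"

text \<open>Paratopism (alpha, beta, gamma; (12)) applied to L, permutations acting on the right.\<close>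
definition paratope12 ::
  "(nat \<Rightarrow> nat) \<Rightarrow> (nat \<Rightarrow> nat) \<Rightarrow> (nat \<Rightarrow> nat) \<Rightarrow> (nat \<times> nat \<times> nat) set \<Rightarrow> (nat \<times> nat \<times> nat) set" where
  "paratope12 \<alpha> \<beta> \<gamma> T = {(\<beta> y, \<alpha> x, \<gamma> z) | x y z. (x, y, z) \<in> T}"

definition autoparatopism12 ::
  "nat \<Rightarrow> (nat \<Rightarrow> nat \<Rightarrow> nat) \<Rightarrow> (nat \<Rightarrow> nat) \<Rightarrow> (nat \<Rightarrow> nat) \<Rightarrow> (nat \<Rightarrow> nat) \<Rightarrow> bool" where
  "autoparatopism12 n L \<alpha> \<beta> \<gamma> \<longleftrightarrow>
     \<alpha> permutes {0..<n} \<and> \<beta> permutes {0..<n} \<and> \<gamma> permutes {0..<n} \<and>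
     paratope12 \<alpha> \<beta> \<gamma> (triples n L) = triples n L"

definition cycle_len :: "(nat \<Rightarrow> nat) \<Rightarrow> nat \<Rightarrow> nat" where
  "cycle_len \<pi> i = (LEAST k. 0 < k \<and> (\<pi> ^^ k) i = i)"

definition symbols_of :: "(nat \<Rightarrow> nat \<Rightarrow> nat) \<Rightarrow> nat set \<Rightarrow> nat set \<Rightarrow> nat set" where
  "symbols_of L R C = {L x y | x y. x \<in> R \<and> y \<in> C}"

definition subsquare :: "nat \<Rightarrow> (nat \<Rightarrow> nat \<Rightarrow> nat) \<Rightarrow> nat set \<Rightarrow> nat set \<Rightarrow> bool" where
  "subsquare n L R C \<longleftrightarrow> R \<subseteq> {0..<n} \<and> C \<subseteq> {0..<n} \<and>
     card R = card C \<and> card (symbols_of L R C) = card R"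

end

theory Submission
  imports Defs
begin

text \<open>Applying the autoparatopism twice gives \<open>L (x\<beta>\<^sup>k) (y\<beta>\<^sup>k) = (L x y)\<gamma>\<^sup>2\<^sup>k\<close>.
  Hence for \<open>x, y \<in> R\<^sub>\<Lambda>\<close> the \<open>\<gamma>\<close>-cycle length of \<open>L x y\<close> divides \<open>2 lcm(o\<^sub>\<beta>(x), o\<^sub>\<beta>(y))\<close>,
  and \<open>\<Lambda>\<close> is closed under divisors, so it lies in \<open>\<Lambda>'\<close>. Conversely, if row \<open>x \<in> R\<^sub>\<Lambda>\<close>
  has a symbol \<open>z \<in> S\<^sub>\<Lambda>\<^sub>'\<close> in column \<open>y\<close>, then \<open>\<beta>\<^sup>k\<close> with \<open>k \<in> \<Lambda>\<close> fixes \<open>x\<close> and \<open>\<gamma>\<^sup>2\<^sup>k\<close>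
  fixes \<open>z\<close>, so by the Latin property \<open>\<beta>\<^sup>k\<close> fixes \<open>y\<close>, i.e. \<open>y \<in> R\<^sub>\<Lambda>\<close>. Thus every row
  indexed by \<open>R\<^sub>\<Lambda>\<close> maps the columns \<open>R\<^sub>\<Lambda>\<close> bijectively onto \<open>S\<^sub>\<Lambda>\<^sub>'\<close>.\<close>

lemma cycle_len_pos_funpow:
  assumes "permutation p"
  shows "0 < cycle_len p i \<and> (p ^^ cycle_len p i) i = i"
proof -
  obtain m where m: "m > 0" "(p ^^ m) i = i"
    using permutation_self[OF assms] by blast
  show ?thesis
    unfolding cycle_len_def by (rule LeastI[of _ m]) (use m in auto)
qed

lemma cycle_len_pos: "permutation p \<Longrightarrow> 0 < cycle_len p i"
  using cycle_len_pos_funpow by blast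

lemma funpow_fixed_iff_cycle_len_dvd:
  assumes "permutation p"
  shows "(p ^^ k) i = i \<longleftrightarrow> cycle_len p i dvd k"
proof -
  let ?c = "cycle_len p i"
  have c: "0 < ?c" "(p ^^ ?c) i = i"
    using cycle_len_pos_funpow[OF assms] by auto
  have "(p ^^ k) i = (p ^^ (k mod ?c)) i"
    by (rule funpow_mod_eq[OF c(2), symmetric])
  moreover have "(p ^^ (k mod ?c)) i = i \<longleftrightarrow> k mod ?c = 0"
  proof
    assume "(p ^^ (k mod ?c)) i = i"
    moreover have "k mod ?c < ?c"
      using c(1) by simp
    ultimately show "k mod ?c = 0"
      using not_less_Least[of "k mod ?c" "\<lambda>k. 0 < k \<and> (p ^^ k) i = i"]
      unfolding cycle_len_def by auto
  qed simp
  ultimately show ?thesis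
    by (simp add: dvd_eq_mod_eq_0)
qed

locale lcm_closed_set =
  fixes \<Lambda> :: "nat set"
  assumes pos: "\<Lambda> \<subseteq> {k. 0 < k}"
    and both_mem_iff_lcm_mem: "\<And>a b. 0 < a \<Longrightarrow> 0 < b \<Longrightarrow> (a \<in> \<Lambda> \<and> b \<in> \<Lambda> \<longleftrightarrow> lcm a b \<in> \<Lambda>)"
begin

lemma mem_pos: "k \<in> \<Lambda> \<Longrightarrow> 0 < k"
  using pos by blast

lemma lcm_mem: "a \<in> \<Lambda> \<Longrightarrow> b \<in> \<Lambda> \<Longrightarrow> lcm a b \<in> \<Lambda>"
  using both_mem_iff_lcm_mem mem_pos by blast

lemma dvd_mem:
  assumes "k \<in> \<Lambda>" "d dvd k" "0 < d"
  shows "d \<in> \<Lambda>"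
  using both_mem_iff_lcm_mem[of d k] assms mem_pos by (simp add: lcm_proj2_if_dvd)

lemma dvd_double_mem:
  assumes "k \<in> \<Lambda>" "d dvd 2 * k" "0 < d"
  shows "d \<in> \<Lambda> \<union> {2 * x | x. x \<in> \<Lambda>}"
proof (cases "even d")
  case True
  then obtain e where e: "d = 2 * e" by blast
  then have "e \<in> \<Lambda>"
    using dvd_mem[OF assms(1)] assms(2,3) by simp
  then show ?thesis using e by blast
next
  case False
  then have "coprime d 2" by simp
  then have "d dvd k"
    using assms(2) coprime_dvd_mult_right_iff by blast
  then show ?thesis using dvd_mem assms by blast
qed

lemma double_mem_cases:
  assumes "d \<in> \<Lambda> \<union> {2 * x | x. x \<in> \<Lambda>}"
  obtains c where "c \<in> \<Lambda>" "d dvd 2 * c"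
  using assms by fastforce

end

lemma subsquare_if_rows_bij:
  assumes "R \<subseteq> {0..<n}" "R \<noteq> {}" "\<And>x. x \<in> R \<Longrightarrow> bij_betw (L x) R S"
  shows "card R = card S \<and> subsquare n L R R \<and> symbols_of L R R = S"
proof -
  obtain x where "x \<in> R" using assms(2) by blast
  have "symbols_of L R R = (\<Union>x\<in>R. L x ` R)"
    unfolding symbols_of_def by blast
  also have "\<dots> = S"
    using assms(3) \<open>x \<in> R\<close> by (auto simp: bij_betw_def)
  finally have "symbols_of L R R = S" .
  moreover have "card R = card S"
    using assms(3) \<open>x \<in> R\<close> bij_betw_same_card by blast
  ultimately show ?thesis
    unfolding subsquare_def using assms(1) by simp
qed

locale latin_autoparatopism12 =
  fixes n :: nat and L :: "nat \<Rightarrow> nat \<Rightarrow> nat" and \<beta> \<gamma> :: "nat \<Rightarrow> nat"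
  assumes latin: "latin_square n L"
    and auto: "autoparatopism12 n L id \<beta> \<gamma>"
begin

lemma permutes_\<beta>\<gamma>: "\<beta> permutes {0..<n}" "\<gamma> permutes {0..<n}"
  using auto unfolding autoparatopism12_def by auto

lemma permutation_\<beta>\<gamma>: "permutation \<beta>" "permutation \<gamma>"
  using permutes_\<beta>\<gamma> permutes_imp_permutation by blast+

lemma funpow_\<beta>_less: "x < n \<Longrightarrow> (\<beta> ^^ k) x < n"
  using permutes_in_funpow_image[OF permutes_\<beta>\<gamma>(1)] by simp

lemma row_bij: "x < n \<Longrightarrow> bij_betw (L x) {0..<n} {0..<n}"
  using latin unfolding latin_square_def by (intro endo_inj_surj bij_betw_imageI) auto

lemma entry_swap: "x < n \<Longrightarrow> y < n \<Longrightarrow> L (\<beta> y) x = \<gamma> (L x y)"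
proof -
  assume "x < n" "y < n"
  then have "(\<beta> y, x, \<gamma> (L x y)) \<in> paratope12 id \<beta> \<gamma> (triples n L)"
    unfolding paratope12_def triples_def by force
  then have "(\<beta> y, x, \<gamma> (L x y)) \<in> triples n L"
    using auto unfolding autoparatopism12_def by simp
  then show ?thesis unfolding triples_def by auto
qed

lemma entry_funpow:
  "x < n \<Longrightarrow> y < n \<Longrightarrow> L ((\<beta> ^^ k) x) ((\<beta> ^^ k) y) = (\<gamma> ^^ (2 * k)) (L x y)"
proof (induction k)
  case (Suc k)
  let ?a = "(\<beta> ^^ k) x" and ?b = "(\<beta> ^^ k) y"
  have "?a < n" "?b < n" "\<beta> ?b < n"
    using funpow_\<beta>_less[of _ k] funpow_\<beta>_less[of _ "Suc k"] Suc.prems by auto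
  then have "L (\<beta> ?a) (\<beta> ?b) = \<gamma> (\<gamma> (L ?a ?b))"
    using entry_swap[of "\<beta> ?b" ?a] entry_swap[of ?a ?b] by simp
  then show ?case using Suc by simp
qed simp

lemma symbol_cycle_len_dvd:
  assumes "x < n" "y < n"
  shows "cycle_len \<gamma> (L x y) dvd 2 * lcm (cycle_len \<beta> x) (cycle_len \<beta> y)"
proof -
  let ?m = "lcm (cycle_len \<beta> x) (cycle_len \<beta> y)"
  have "(\<beta> ^^ ?m) x = x" "(\<beta> ^^ ?m) y = y"
    using funpow_fixed_iff_cycle_len_dvd[OF permutation_\<beta>\<gamma>(1)] by auto
  then have "(\<gamma> ^^ (2 * ?m)) (L x y) = L x y"
    using entry_funpow[OF assms, of ?m] by simp
  then show ?thesis
    using funpow_fixed_iff_cycle_len_dvd[OF permutation_\<beta>\<gamma>(2)] by blast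
qed

lemma column_cycle_len_dvd:
  assumes "x < n" "y < n" "cycle_len \<gamma> (L x y) dvd 2 * c"
  shows "cycle_len \<beta> y dvd lcm (cycle_len \<beta> x) c"
proof -
  let ?k = "lcm (cycle_len \<beta> x) c"
  have "(\<beta> ^^ ?k) x = x"
    using funpow_fixed_iff_cycle_len_dvd[OF permutation_\<beta>\<gamma>(1)] by auto
  moreover have "(\<gamma> ^^ (2 * ?k)) (L x y) = L x y"
    using funpow_fixed_iff_cycle_len_dvd[OF permutation_\<beta>\<gamma>(2)] assms(3)
    by (meson dvd_lcm2 dvd_trans mult_dvd_mono dvd_refl)
  ultimately have "L x ((\<beta> ^^ ?k) y) = L x y"
    using entry_funpow[OF assms(1,2), of ?k] by simp
  then have "(\<beta> ^^ ?k) y = y"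
    using row_bij[OF assms(1)] funpow_\<beta>_less[OF assms(2)] assms(2)
    by (auto simp: bij_betw_def inj_on_def)
  then show ?thesis
    using funpow_fixed_iff_cycle_len_dvd[OF permutation_\<beta>\<gamma>(1)] by blast
qed

lemma symbol_cycle_len_mem:
  assumes "lcm_closed_set \<Lambda>" and "x < n" "y < n" "cycle_len \<beta> x \<in> \<Lambda>" "cycle_len \<beta> y \<in> \<Lambda>"
  shows "cycle_len \<gamma> (L x y) \<in> \<Lambda> \<union> {2 * x | x. x \<in> \<Lambda>}"
proof -
  interpret lcm_closed_set \<Lambda> by (fact assms(1))
  show ?thesis
    by (rule dvd_double_mem[OF lcm_mem[OF assms(4,5)] symbol_cycle_len_dvd[OF assms(2,3)]
          cycle_len_pos[OF permutation_\<beta>\<gamma>(2)]])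
qed

lemma column_cycle_len_mem:
  assumes "lcm_closed_set \<Lambda>" and "x < n" "y < n" "cycle_len \<beta> x \<in> \<Lambda>"
    and "cycle_len \<gamma> (L x y) \<in> \<Lambda> \<union> {2 * x | x. x \<in> \<Lambda>}"
  shows "cycle_len \<beta> y \<in> \<Lambda>"
proof -
  interpret lcm_closed_set \<Lambda> by (fact assms(1))
  obtain c where c: "c \<in> \<Lambda>" "cycle_len \<gamma> (L x y) dvd 2 * c"
    using double_mem_cases[OF assms(5)] by blast
  show ?thesis
    by (rule dvd_mem[OF lcm_mem[OF assms(4) c(1)] column_cycle_len_dvd[OF assms(2,3) c(2)]
          cycle_len_pos[OF permutation_\<beta>\<gamma>(1)]])
qed

lemma row_bij_cycle_len_classes:
  assumes "lcm_closed_set \<Lambda>" and "x < n" "cycle_len \<beta> x \<in> \<Lambda>"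
  shows "bij_betw (L x) {i \<in> {0..<n}. cycle_len \<beta> i \<in> \<Lambda>}
           {i \<in> {0..<n}. cycle_len \<gamma> i \<in> \<Lambda> \<union> {2 * x | x. x \<in> \<Lambda>}}"
    (is "bij_betw (L x) ?R ?S")
proof (rule bij_betw_imageI)
  have row: "inj_on (L x) {0..<n}" "L x ` {0..<n} = {0..<n}"
    using row_bij[OF assms(2)] by (simp_all add: bij_betw_def)
  show "inj_on (L x) ?R"
    using row(1) by (rule inj_on_subset) auto
  show "L x ` ?R = ?S"
  proof
    show "L x ` ?R \<subseteq> ?S"
      using symbol_cycle_len_mem[OF assms(1,2) _ assms(3)] row(2) by fastforce
    show "?S \<subseteq> L x ` ?R"
    proof
      fix z assume z: "z \<in> ?S"
      then obtain y where y: "y < n" "z = L x y"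
        using row(2) by (metis (no_types, lifting) atLeastLessThan_iff imageE mem_Collect_eq)
      then have "y \<in> ?R"
        using column_cycle_len_mem[OF assms(1,2) _ assms(3)] z by auto
      then show "z \<in> L x ` ?R" using y by blast
    qed
  qed
qed

end

theorem theorem3p4:
  fixes \<Lambda> :: "nat set" and n :: nat and L :: "nat \<Rightarrow> nat \<Rightarrow> nat"
    and \<beta> \<gamma> :: "nat \<Rightarrow> nat"
  assumes pos: "\<Lambda> \<subseteq> {k. 0 < k}"
    and lcm_closed: "\<And>a b. 0 < a \<Longrightarrow> 0 < b \<Longrightarrow> (a \<in> \<Lambda> \<and> b \<in> \<Lambda> \<longleftrightarrow> lcm a b \<in> \<Lambda>)"
    and latin: "latin_square n L"
    and auto: "autoparatopism12 n L id \<beta> \<gamma>"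
    and nonempty: "{i \<in> {0..<n}. cycle_len \<beta> i \<in> \<Lambda>} \<noteq> {}"
  shows "card {i \<in> {0..<n}. cycle_len \<beta> i \<in> \<Lambda>}
           = card {i \<in> {0..<n}. cycle_len \<gamma> i \<in> \<Lambda> \<union> {2 * x | x. x \<in> \<Lambda>}}
       \<and> subsquare n L {i \<in> {0..<n}. cycle_len \<beta> i \<in> \<Lambda>} {i \<in> {0..<n}. cycle_len \<beta> i \<in> \<Lambda>}
       \<and> symbols_of L {i \<in> {0..<n}. cycle_len \<beta> i \<in> \<Lambda>} {i \<in> {0..<n}. cycle_len \<beta> i \<in> \<Lambda>}
           = {i \<in> {0..<n}. cycle_len \<gamma> i \<in> \<Lambda> \<union> {2 * x | x. x \<in> \<Lambda>}}"
proof -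
  interpret latin_autoparatopism12 n L \<beta> \<gamma>
    using latin auto by unfold_locales
  have "lcm_closed_set \<Lambda>"
    using pos lcm_closed by unfold_locales
  show ?thesis
  proof (rule subsquare_if_rows_bij[OF _ nonempty])
    fix x assume "x \<in> {i \<in> {0..<n}. cycle_len \<beta> i \<in> \<Lambda>}"
    then show "bij_betw (L x) {i \<in> {0..<n}. cycle_len \<beta> i \<in> \<Lambda>}
        {i \<in> {0..<n}. cycle_len \<gamma> i \<in> \<Lambda> \<union> {2 * x | x. x \<in> \<Lambda>}}"
      using row_bij_cycle_len_classes[OF \<open>lcm_closed_set \<Lambda>\<close>] by simp
  qed auto
qed

end
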